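(* Let $T$ be a tree with $n\ge 2$ vertices, let $v$ be a vertex of $T$, and let $\ell$ be the length (number of edges) of the longest descending path in the rooted tree $T_v$. Then $$F(T)\leq \left[\sum_{k=0}^{\ell-1}\binom{n-2}{k}\right] F(T_v).$$ In particular, $F(T)\leq 2^{n-2}F(T_v)$.
   Context: For a finite undirected graph $G=(V,E)$, a shelling of $G$ is a total ordering $\sigma(1),\ldots,\sigma(|E|)$ of $E$ such that for every $k$ the edges $\sigma(1),\ldots,\sigma(k)$ form a connected subgraph; $F(G)$ is the number of shellings of $G$. For a vertex $v$ of a tree $T$, $T_v$ denotes $T$ rooted at $v$; a shelling of $T_v$ is a shelling $\sigma$ of $T$ whose first edge $\sigma(1)$ is incident to $v$, and $F(T_v)$ is the number of such shellings. In $T_v$, $u$ is the parent of $w$ (and $w$ a child of $u$) if $(u,w)$ is an edge and $u$ is closer to $v$ than $w$; a descending path from $u$ to $w$ is a path $u - v_1 - \cdots - v_r - w$ in which each vertex is the parent of the next. *)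

theory Defs
  imports Main
begin

definition simple_graph :: "'a set \<Rightarrow> 'a set set \<Rightarrow> bool" where
  "simple_graph V E \<longleftrightarrow> finite V \<and>
     (\<forall>e\<in>E. \<exists>u w. u \<noteq> w \<and> e = {u, w} \<and> u \<in> V \<and> w \<in> V)"

definition is_path :: "'a set set \<Rightarrow> 'a list \<Rightarrow> bool" where
  "is_path E p \<longleftrightarrow> p \<noteq> [] \<and> distinct p \<and>
     (\<forall>i. Suc i < length p \<longrightarrow> {p ! i, p ! Suc i} \<in> E)"

definition connected_graph :: "'a set \<Rightarrow> 'a set set \<Rightarrow> bool" where
  "connected_graph V E \<longleftrightarrow>
     (\<forall>u\<in>V. \<forall>w\<in>V. \<exists>p. is_path E p \<and> p ! 0 = u \<and> last p = w)"

definition has_cycle :: "'a set set \<Rightarrow> bool" where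
  "has_cycle E \<longleftrightarrow> (\<exists>p. is_path E p \<and> length p \<ge> 3 \<and> {last p, p ! 0} \<in> E)"

definition is_tree :: "'a set \<Rightarrow> 'a set set \<Rightarrow> bool" where
  "is_tree V E \<longleftrightarrow> simple_graph V E \<and> V \<noteq> {} \<and> connected_graph V E \<and> \<not> has_cycle E"

definition is_shelling :: "'a set set \<Rightarrow> 'a set list \<Rightarrow> bool" where
  "is_shelling E \<sigma> \<longleftrightarrow> distinct \<sigma> \<and> set \<sigma> = E \<and>
     (\<forall>k. 1 \<le> k \<and> k \<le> length \<sigma> \<longrightarrow>
        connected_graph (\<Union> (set (take k \<sigma>))) (set (take k \<sigma>)))"

definition num_shellings :: "'a set set \<Rightarrow> nat" where
  "num_shellings E = card {\<sigma>. is_shelling E \<sigma>}"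

text \<open>Shellings of the rooted tree T_v: first edge incident to v.\<close>
definition num_rooted_shellings :: "'a set set \<Rightarrow> 'a \<Rightarrow> nat" where
  "num_rooted_shellings E v = card {\<sigma>. is_shelling E \<sigma> \<and> v \<in> hd \<sigma>}"

text \<open>Descending paths in T_v (as vertex lists, each vertex the parent of the next):
  a path is descending iff its vertices are, in order, at strictly increasing
  distance from the root v.\<close>
definition dist_from :: "'a set set \<Rightarrow> 'a \<Rightarrow> 'a \<Rightarrow> nat" where
  "dist_from E v w = (LEAST n. \<exists>p. is_path E p \<and> p ! 0 = v \<and> last p = w \<and> length p = Suc n)"

definition is_descending_path :: "'a set set \<Rightarrow> 'a \<Rightarrow> 'a list \<Rightarrow> bool" where
  "is_descending_path E v p \<longleftrightarrow> is_path E p \<and>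
     (\<forall>i. Suc i < length p \<longrightarrow> dist_from E v (p ! Suc i) = Suc (dist_from E v (p ! i)))"

definition longest_desc :: "'a set set \<Rightarrow> 'a \<Rightarrow> nat" where
  "longest_desc E v = Max {length p - 1 | p. is_descending_path E v p}"

end

theory Submission
  imports Defs
begin

text \<open>The first edge \<open>e\<close> of a shelling \<open>\<sigma>\<close> is the last edge of a unique descending path
  from \<open>v\<close>, the spine of \<open>\<sigma>\<close>, with \<open>c \<le> \<ell>\<close> edges. Every prefix of \<open>\<sigma>\<close> is connected and
  contains \<open>e\<close>, so a prefix ending with a spine edge contains the whole path from that edge down to
  \<open>e\<close>: the spine edges occur in \<open>\<sigma>\<close> in reverse order. Hence \<open>\<sigma>\<close> is determined by \<open>c\<close>, by the
  rooted shelling that runs down the spine and then lists the remaining edges in the order of \<open>\<sigma>\<close>,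
  and by the \<open>(c - 1)\<close>-set of positions of the spine edges other than \<open>e\<close> among
  \<open>\<sigma>(2), \<dots>, \<sigma>(|E|)\<close>. As \<open>|E| - 1 \<le> n - 2\<close>, counting these data gives the bound.\<close>

lemma successively_iff_nth:
  "successively P xs \<longleftrightarrow> (\<forall>i. Suc i < length xs \<longrightarrow> P (xs ! i) (xs ! Suc i))"
proof (induction P xs rule: successively.induct)
  case (3 P x y xs)
  then show ?case
    by (auto simp: nth_Cons split: nat.split)
qed auto

lemma take_filter_eq_filter_take: "\<exists>j. take n (filter P xs) = filter P (take j xs)"
proof (induction xs arbitrary: n)
  case (Cons x xs)
  show ?case
  proof (cases n)
    case (Suc m)
    obtain j where "take (if P x then m else n) (filter P xs) = filter P (take j xs)"
      using Cons.IH by blast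
    then show ?thesis using Suc by (intro exI[of _ "Suc j"]) auto
  qed (intro exI[of _ 0], simp)
qed simp

lemma list_eq_by_filter_partition:
  assumes "length xs = length ys" "\<forall>j<length xs. xs ! j \<in> G \<longleftrightarrow> ys ! j \<in> G"
    "filter (\<lambda>x. x \<in> G) xs = filter (\<lambda>x. x \<in> G) ys"
    "filter (\<lambda>x. x \<notin> G) xs = filter (\<lambda>x. x \<notin> G) ys"
  shows "xs = ys"
  using assms
proof (induction xs arbitrary: ys)
  case (Cons a xs)
  obtain b ys' where ys: "ys = b # ys'" using Cons.prems(1) by (cases ys) auto
  have "a \<in> G \<longleftrightarrow> b \<in> G" "\<forall>j<length xs. xs ! j \<in> G \<longleftrightarrow> ys' ! j \<in> G"
    using Cons.prems(2) ys by fastforce+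
  then show ?case using Cons ys by (cases "a \<in> G") auto
qed simp

definition index_of :: "'b list \<Rightarrow> 'b \<Rightarrow> nat" where
  "index_of xs x = (LEAST i. i < length xs \<and> xs ! i = x)"

lemma index_of_nth: "distinct xs \<Longrightarrow> i < length xs \<Longrightarrow> index_of xs (xs ! i) = i"
  unfolding index_of_def by (rule Least_equality) (auto simp: nth_eq_iff_index_eq)

lemma index_of_in_set: "x \<in> set xs \<Longrightarrow> index_of xs x < length xs \<and> xs ! index_of xs x = x"
  unfolding index_of_def by (rule LeastI_ex) (auto simp: in_set_conv_nth)

lemma filter_in_set_eq_rev:
  assumes "distinct s" "distinct g" "set g \<subseteq> set s"
    and decreasing: "\<forall>i. Suc i < length g \<longrightarrow> index_of s (g ! Suc i) < index_of s (g ! i)"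
  shows "filter (\<lambda>x. x \<in> set g) s = rev g"
proof -
  define R where "R = (\<lambda>a b. index_of s a < index_of s b)"
  have "transp R" unfolding R_def by (auto intro: transpI)
  have "sorted_wrt R (rev g)"
    unfolding sorted_wrt_iff_nth_Suc_transp[OF \<open>transp R\<close>]
  proof (intro allI impI)
    fix i assume i: "Suc i < length (rev g)"
    define j where "j = length g - 2 - i"
    have "Suc j < length g" "rev g ! i = g ! Suc j" "rev g ! Suc i = g ! j"
      using i unfolding j_def by (auto simp: rev_nth Suc_diff_Suc numeral_2_eq_2)
    then show "R (rev g ! i) (rev g ! Suc i)" using decreasing unfolding R_def by simp
  qed
  moreover have "sorted_wrt R s"
    using assms(1) by (simp add: sorted_wrt_iff_nth_less R_def index_of_nth)
  then have "sorted_wrt R (filter (\<lambda>x. x \<in> set g) s)"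
    by (rule sorted_wrt_filter)
  ultimately have "sorted_wrt (<) (map (index_of s) (rev g))"
    "sorted_wrt (<) (map (index_of s) (filter (\<lambda>x. x \<in> set g) s))"
    unfolding R_def by (simp_all add: sorted_wrt_map)
  moreover have "set (map (index_of s) (filter (\<lambda>x. x \<in> set g) s)) = set (map (index_of s) (rev g))"
    using assms(3) by auto
  ultimately have "map (index_of s) (filter (\<lambda>x. x \<in> set g) s) = map (index_of s) (rev g)"
    unfolding strict_sorted_iff by (metis sorted_distinct_set_unique)
  moreover have "inj_on (index_of s) (set s)"
    by (metis index_of_in_set inj_onI)
  moreover have "set (filter (\<lambda>x. x \<in> set g) s) \<union> set (rev g) \<subseteq> set s"
    using assms(3) by auto
  ultimately show ?thesis
    using inj_on_map_eq_map inj_on_subset by blast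
qed

abbreviation walk :: "'a set set \<Rightarrow> 'a list \<Rightarrow> bool" where
  "walk E xs \<equiv> successively (\<lambda>x y. {x, y} \<in> E) xs"

lemma is_path_iff_walk: "is_path E p \<longleftrightarrow> p \<noteq> [] \<and> distinct p \<and> walk E p"
  unfolding is_path_def successively_iff_nth by auto

lemma walk_mono: "walk E p \<Longrightarrow> E \<subseteq> F \<Longrightarrow> walk F p"
  by (erule successively_mono) auto

lemma walk_take: "walk E xs \<Longrightarrow> walk E (take n xs)"
  by (metis append_take_drop_id successively_append_iff)

lemma walk_drop: "walk E xs \<Longrightarrow> walk E (drop n xs)"
  by (metis append_take_drop_id successively_append_iff)

lemma walk_rev: "walk E xs \<Longrightarrow> walk E (rev xs)"
  by (simp add: insert_commute)

lemma is_path_drop: "is_path E p \<Longrightarrow> i < length p \<Longrightarrow> is_path E (drop i p)"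
  unfolding is_path_iff_walk by (simp add: walk_drop)

lemma is_path_take: "is_path E p \<Longrightarrow> 0 < i \<Longrightarrow> is_path E (take i p)"
  unfolding is_path_iff_walk by (simp add: walk_take)

lemma walk_append_tl:
  assumes "walk E xs" "walk E ys" "xs \<noteq> []" "last xs = hd ys"
  shows "walk E (xs @ tl ys)"
  using assms by (cases ys) (auto simp: successively_append_iff successively_Cons)

lemma last_append_tl: "xs \<noteq> [] \<Longrightarrow> ys \<noteq> [] \<Longrightarrow> last xs = hd ys \<Longrightarrow> last (xs @ tl ys) = last ys"
  by (cases ys) auto

lemma walk_join:
  assumes "p \<noteq> []" "walk E p" "q \<noteq> []" "walk E q" "last p = hd q"
  shows "\<exists>r. r \<noteq> [] \<and> walk E r \<and> hd r = hd p \<and> last r = last q"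
  using assms walk_append_tl[of E p q] last_append_tl[of p q] by (intro exI[of _ "p @ tl q"]) auto

lemma walk_between_nth:
  assumes "walk E p" "a < length p" "b < length p"
  shows "\<exists>w. w \<noteq> [] \<and> walk E w \<and> hd w = p ! a \<and> last w = p ! b"
proof -
  have ordered: "\<exists>w. w \<noteq> [] \<and> walk E w \<and> hd w = p ! a \<and> last w = p ! b"
    if "a \<le> b" "b < length p" for a b
  proof (intro exI conjI)
    let ?w = "drop a (take (Suc b) p)"
    show "?w \<noteq> []" "walk E ?w" using that assms(1) by (simp_all add: walk_drop walk_take)
    show "hd ?w = p ! a" using that by (simp add: hd_drop_conv_nth)
    show "last ?w = p ! b" using that by (simp add: last_drop take_Suc_conv_app_nth)
  qed
  show ?thesis
  proof (cases "a \<le> b")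
    case False
    then obtain w where "w \<noteq> []" "walk E w" "hd w = p ! b" "last w = p ! a"
      using ordered[of b a] assms by auto
    then show ?thesis using walk_rev by (intro exI[of _ "rev w"]) (auto simp: hd_rev last_rev)
  qed (use ordered assms in blast)
qed

lemma path_within_walk:
  assumes "xs \<noteq> []" "walk E xs"
  shows "\<exists>r. r \<noteq> [] \<and> distinct r \<and> walk E r \<and> hd r = hd xs \<and> last r = last xs \<and> set r \<subseteq> set xs"
  using assms
proof (induction xs)
  case (Cons x xs)
  show ?case
  proof (cases "xs = []")
    case False
    then obtain r where r: "r \<noteq> []" "distinct r" "walk E r" "hd r = hd xs" "last r = last xs"
        "set r \<subseteq> set xs"
      using Cons by (auto simp: successively_Cons)
    show ?thesis
    proof (cases "x \<in> set r")
      case True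
      define s where "s = dropWhile (\<lambda>y. y \<noteq> x) r"
      have rs: "r = takeWhile (\<lambda>y. y \<noteq> x) r @ s" unfolding s_def by simp
      have "s \<noteq> []" using True unfolding s_def by (simp add: dropWhile_eq_Nil_conv)
      moreover have "hd s = x" using hd_dropWhile[OF \<open>s \<noteq> []\<close>[unfolded s_def]] unfolding s_def by simp
      moreover have "walk E s" "distinct s" "last s = last r" "set s \<subseteq> set r"
        using r rs \<open>s \<noteq> []\<close> by (metis successively_append_iff, metis distinct_append,
            metis last_append, metis Un_upper2 set_append)
      ultimately show ?thesis using r False by (intro exI[of _ s]) auto
    next
      case False
      then show ?thesis using r Cons.prems \<open>xs \<noteq> []\<close>
        by (intro exI[of _ "x # r"]) (auto simp: successively_Cons)
    qed
  qed (intro exI[of _ "[x]"], simp)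
qed simp

lemma connected_graph_iff_walks:
  "connected_graph V E \<longleftrightarrow> (\<forall>u\<in>V. \<forall>w\<in>V. \<exists>p. p \<noteq> [] \<and> walk E p \<and> hd p = u \<and> last p = w)"
  unfolding connected_graph_def is_path_iff_walk
  by (metis hd_conv_nth path_within_walk)

lemma connected_graph_walk:
  assumes "connected_graph V E" "u \<in> V" "w \<in> V" "E \<subseteq> F"
  shows "\<exists>p. p \<noteq> [] \<and> walk F p \<and> hd p = u \<and> last p = w"
proof -
  obtain p where "p \<noteq> []" "walk E p" "hd p = u" "last p = w"
    using assms(1-3) unfolding connected_graph_iff_walks by blast
  then show ?thesis using walk_mono[OF _ assms(4)] by blast
qed

lemma connected_graph_Un:
  assumes "connected_graph V1 E1" "connected_graph V2 E2" "x \<in> V1" "x \<in> V2"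
  shows "connected_graph (V1 \<union> V2) (E1 \<union> E2)"
  unfolding connected_graph_iff_walks
proof (intro ballI)
  have walk_x: "\<exists>p. p \<noteq> [] \<and> walk (E1 \<union> E2) p \<and> hd p = u \<and> last p = x"
    "\<exists>p. p \<noteq> [] \<and> walk (E1 \<union> E2) p \<and> hd p = x \<and> last p = u"
    if u: "u \<in> V1 \<union> V2" for u
  proof -
    consider "u \<in> V1" | "u \<in> V2" using u by blast
    then show "\<exists>p. p \<noteq> [] \<and> walk (E1 \<union> E2) p \<and> hd p = u \<and> last p = x"
      "\<exists>p. p \<noteq> [] \<and> walk (E1 \<union> E2) p \<and> hd p = x \<and> last p = u"
      by (cases; use assms in \<open>blast intro: connected_graph_walk\<close>)+
  qed
  fix u w assume "u \<in> V1 \<union> V2" "w \<in> V1 \<union> V2"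
  then obtain p q where p: "p \<noteq> []" "walk (E1 \<union> E2) p" "hd p = u" "last p = x"
    and q: "q \<noteq> []" "walk (E1 \<union> E2) q" "hd q = x" "last q = w"
    using walk_x by meson
  show "\<exists>r. r \<noteq> [] \<and> walk (E1 \<union> E2) r \<and> hd r = u \<and> last r = w"
    using walk_join[OF p(1,2) q(1,2)] p(3,4) q(3,4) by simp
qed

lemma has_cycle_if_detour:
  assumes "{a, x} \<in> E" "{a, y} \<in> E" "x \<noteq> y"
    and "w \<noteq> []" "walk E w" "hd w = x" "last w = y" "a \<notin> set w"
  shows "has_cycle E"
proof -
  obtain r where r: "r \<noteq> []" "distinct r" "walk E r" "hd r = x" "last r = y" "set r \<subseteq> set w"
    using path_within_walk[OF assms(4,5)] assms(6,7) by blast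
  have "length r \<noteq> 1" using r assms(3) by (cases r) auto
  with r(1) have "length (a # r) \<ge> 3" by (cases "length r") auto
  moreover have "is_path E (a # r)"
    unfolding is_path_iff_walk using r assms(1,8) by (auto simp: successively_Cons)
  moreover have "{last (a # r), (a # r) ! 0} \<in> E" using r assms(2) by (auto simp: insert_commute)
  ultimately show ?thesis unfolding has_cycle_def by blast
qed

lemma path_unique_if_acyclic:
  assumes "\<not> has_cycle E" "is_path E p" "is_path E q" "hd p = hd q" "last p = last q"
  shows "p = q"
  using assms(2-)
proof (induction p arbitrary: q)
  case (Cons a p')
  obtain q' where q: "q = a # q'" using Cons.prems by (cases q) (auto simp: is_path_iff_walk)
  have last_Cons: "last (a # xs) = a \<longleftrightarrow> xs = []" if "distinct (a # xs)" for xs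
    using that by (metis distinct.simps(2) last.simps last_in_set)
  have "p' = [] \<longleftrightarrow> q' = []"
    using Cons.prems q last_Cons[of p'] last_Cons[of q'] by (auto simp: is_path_iff_walk)
  then consider "p' = []" "q' = []" | "p' \<noteq> []" "q' \<noteq> []" by blast
  then show ?case
  proof cases
    case 2
    have p': "is_path E p'" "{a, hd p'} \<in> E" "a \<notin> set p'"
      using Cons.prems(1) 2 by (auto simp: is_path_iff_walk successively_Cons)
    have q': "is_path E q'" "{a, hd q'} \<in> E" "a \<notin> set q'"
      using Cons.prems(2) 2 q by (auto simp: is_path_iff_walk successively_Cons)
    have "last p' = last q'" using Cons.prems(4) q 2 by simp
    show ?thesis
    proof (cases "hd q' = hd p'")
      case True
      then show ?thesis using Cons.IH[OF p'(1) q'(1)] \<open>last p' = last q'\<close> q by simp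
    next
      case False
      let ?w = "q' @ tl (rev p')"
      have "walk E ?w"
        using p' q' 2 \<open>last p' = last q'\<close>
        by (intro walk_append_tl) (auto simp: is_path_iff_walk hd_rev insert_commute)
      moreover have "last ?w = hd p'"
        using 2 \<open>last p' = last q'\<close> by (subst last_append_tl) (auto simp: hd_rev last_rev)
      moreover have "a \<notin> set ?w" using p'(3) q'(3) by (cases "rev p'") auto
      ultimately have "has_cycle E"
        using has_cycle_if_detour[OF q'(2) p'(2) False, of ?w] 2 by simp
      then show ?thesis using assms(1) by simp
    qed
  qed (use q in simp)
qed (simp add: is_path_iff_walk)

definition path_edges :: "'a list \<Rightarrow> 'a set list" where
  "path_edges p = map (\<lambda>i. {p ! i, p ! Suc i}) [0..<length p - 1]"

lemma length_path_edges [simp]: "length (path_edges p) = length p - 1"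
  by (simp add: path_edges_def)

lemma nth_path_edges: "i < length p - 1 \<Longrightarrow> path_edges p ! i = {p ! i, p ! Suc i}"
  by (simp add: path_edges_def)

lemma take_path_edges: "take k (path_edges p) = path_edges (take (Suc k) p)"
proof (rule nth_equalityI)
  fix i assume "i < length (take k (path_edges p))"
  then have "i < k" "i < length p - 1" by auto
  then show "take k (path_edges p) ! i = path_edges (take (Suc k) p) ! i"
    by (simp add: nth_path_edges)
qed (cases "length p"; simp add: min_def)

lemma drop_path_edges: "drop i (path_edges p) = path_edges (drop i p)"
  by (rule nth_equalityI) (auto simp: nth_path_edges add.commute)

lemma last_path_edges:
  assumes "2 \<le> length p"
  shows "last (path_edges p) = {p ! (length p - 2), last p}"
proof -
  have "length (path_edges p) \<noteq> 0" using assms by simp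
  then have "last (path_edges p) = path_edges p ! (length p - 2)"
    by (simp add: last_conv_nth numeral_2_eq_2 del: length_path_edges) simp
  also have "\<dots> = {p ! (length p - 2), p ! Suc (length p - 2)}"
    using assms by (simp add: nth_path_edges)
  also have "p ! Suc (length p - 2) = last p"
    using assms by (cases p rule: rev_cases) (auto simp: nth_append numeral_2_eq_2)
  finally show ?thesis .
qed

lemma walk_path_edges: "walk (set (path_edges p)) p"
  unfolding successively_iff_nth
proof (intro allI impI)
  fix i assume "Suc i < length p"
  then have "path_edges p ! i \<in> set (path_edges p)" by (simp add: nth_mem)
  then show "{p ! i, p ! Suc i} \<in> set (path_edges p)"
    using \<open>Suc i < length p\<close> by (simp add: nth_path_edges)
qed

lemma set_path_edges_subset: "walk E p \<Longrightarrow> set (path_edges p) \<subseteq> E"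
  unfolding successively_iff_nth by (auto simp: in_set_conv_nth nth_path_edges)

lemma distinct_path_edges:
  assumes "distinct p"
  shows "distinct (path_edges p)"
  unfolding distinct_conv_nth
proof (intro allI impI)
  fix i j assume ij: "i < length (path_edges p)" "j < length (path_edges p)" "i \<noteq> j"
  show "path_edges p ! i \<noteq> path_edges p ! j"
  proof
    assume "path_edges p ! i = path_edges p ! j"
    then have "{p ! i, p ! Suc i} = {p ! j, p ! Suc j}" using ij by (simp add: nth_path_edges)
    then have "(i = j \<and> Suc i = Suc j) \<or> (i = Suc j \<and> Suc i = j)"
      using assms ij by (auto simp: doubleton_eq_iff nth_eq_iff_index_eq)
    then show False using ij(3) by auto
  qed
qed

lemma Union_path_edges: "2 \<le> length p \<Longrightarrow> \<Union> (set (path_edges p)) = set p"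
proof (intro equalityI subsetI)
  fix x assume "x \<in> \<Union> (set (path_edges p))"
  then obtain i where "i < length p - 1" "x \<in> {p ! i, p ! Suc i}"
    by (auto simp: in_set_conv_nth nth_path_edges)
  then show "x \<in> set p" by auto
next
  fix x assume "2 \<le> length p" "x \<in> set p"
  then obtain j where j: "j < length p" "p ! j = x" by (auto simp: in_set_conv_nth)
  define i where "i = (if j < length p - 1 then j else j - 1)"
  have "i < length p - 1" "x \<in> {p ! i, p ! Suc i}"
    using j \<open>2 \<le> length p\<close> unfolding i_def by auto
  then show "x \<in> \<Union> (set (path_edges p))"
    using nth_mem[of i "path_edges p"] by (auto simp: nth_path_edges)
qed

lemma connected_path_edges:
  "2 \<le> length p \<Longrightarrow> connected_graph (\<Union> (set (path_edges p))) (set (path_edges p))"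
  unfolding connected_graph_iff_walks Union_path_edges
proof (intro ballI)
  fix u w assume "u \<in> set p" "w \<in> set p"
  then obtain a b where "a < length p" "b < length p" "p ! a = u" "p ! b = w"
    by (auto simp: in_set_conv_nth)
  then show "\<exists>q. q \<noteq> [] \<and> walk (set (path_edges p)) q \<and> hd q = u \<and> last q = w"
    using walk_between_nth[OF walk_path_edges] by blast
qed

lemma path_edges_subset_connected_subgraph:
  assumes "\<not> has_cycle E" "is_path E p" "Q \<subseteq> E" "connected_graph (\<Union> Q) Q"
    and "hd p \<in> \<Union> Q" "last p \<in> \<Union> Q"
  shows "set (path_edges p) \<subseteq> Q"
proof -
  obtain w where "w \<noteq> []" "walk Q w" "hd w = hd p" "last w = last p"
    using assms(4-6) unfolding connected_graph_iff_walks by blast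
  then obtain r where r: "r \<noteq> []" "distinct r" "walk Q r" "hd r = hd p" "last r = last p"
    using path_within_walk by metis
  then have "is_path E r" using assms(3) walk_mono unfolding is_path_iff_walk by blast
  then have "r = p" using path_unique_if_acyclic assms(1,2) r(4,5) by blast
  then show ?thesis using r(3) set_path_edges_subset by blast
qed

locale rooted_tree =
  fixes V :: "'a set" and E :: "'a set set" and v :: 'a
  assumes tree: "is_tree V E" and two_le_card_V: "2 \<le> card V" and root_in_V: "v \<in> V"
begin

lemma finite_V: "finite V"
  using tree unfolding is_tree_def simple_graph_def by blast

lemma edge_betweenE:
  assumes "f \<in> E"
  obtains x y where "x \<noteq> y" "f = {x, y}" "x \<in> V" "y \<in> V"
  using tree assms unfolding is_tree_def simple_graph_def by blast

lemma E_subset_Pow_V: "E \<subseteq> Pow V"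
  by (blast elim: edge_betweenE)

lemma finite_E: "finite E"
  using E_subset_Pow_V finite_V by (meson finite_Pow_iff finite_subset)

lemma path_unique: "is_path E p \<Longrightarrow> is_path E q \<Longrightarrow> hd p = hd q \<Longrightarrow> last p = last q \<Longrightarrow> p = q"
  using tree path_unique_if_acyclic unfolding is_tree_def by blast

lemma path_exists:
  assumes "x \<in> V" "y \<in> V"
  shows "\<exists>p. is_path E p \<and> hd p = x \<and> last p = y"
proof -
  obtain p where "is_path E p" "p ! 0 = x" "last p = y"
    using tree assms unfolding is_tree_def connected_graph_def by blast
  then show ?thesis by (intro exI[of _ p]) (simp add: hd_conv_nth is_path_def)
qed

lemma path_vertices_in_V:
  assumes "is_path E p" "2 \<le> length p"
  shows "set p \<subseteq> V"
proof -
  have "set (path_edges p) \<subseteq> E" using assms(1) set_path_edges_subset unfolding is_path_iff_walk by blast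
  then show ?thesis using Union_path_edges[OF assms(2)] E_subset_Pow_V by blast
qed

lemma root_path_to_edge_exists:
  assumes "f \<in> E"
  shows "\<exists>p. is_path E p \<and> hd p = v \<and> 2 \<le> length p \<and> last (path_edges p) = f"
proof -
  obtain x y where xy: "x \<noteq> y" "f = {x, y}" "x \<in> V" "y \<in> V" using assms by (rule edge_betweenE)
  obtain q where q: "is_path E q" "hd q = v" "last q = x" using path_exists[OF root_in_V xy(3)] by blast
  show ?thesis
  proof (cases "y \<in> set q")
    case False
    have "is_path E (q @ [y])"
      using q False xy assms by (auto simp: is_path_iff_walk successively_append_iff)
    moreover have "2 \<le> length (q @ [y])" using q(1) by (cases q) (auto simp: is_path_iff_walk)
    moreover have "(q @ [y]) ! (length (q @ [y]) - 2) = x"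
      using q(1,3) by (cases q rule: rev_cases) (auto simp: is_path_iff_walk nth_append)
    then have "last (path_edges (q @ [y])) = f"
      using last_path_edges[OF calculation(2)] xy by simp
    ultimately show ?thesis using q by (intro exI[of _ "q @ [y]"]) (auto simp: is_path_iff_walk)
  next
    case True
    \<comment> \<open>then \<open>q\<close> already ends with the edge \<open>f\<close>, by uniqueness of the path from \<open>y\<close> to \<open>x\<close>\<close>
    then obtain i where i: "i < length q" "q ! i = y" by (auto simp: in_set_conv_nth)
    have "is_path E [y, x]" using xy assms by (simp add: is_path_iff_walk insert_commute)
    then have "drop i q = [y, x]"
      using path_unique[OF is_path_drop[OF q(1) i(1)]] i q(3) by (simp add: hd_drop_conv_nth)
    then obtain t where t: "q = t @ [y, x]" by (metis append_take_drop_id)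
    then have "2 \<le> length q" by simp
    moreover have "last (path_edges q) = f"
      using last_path_edges[OF calculation] t xy by (simp add: nth_append insert_commute)
    ultimately show ?thesis using q by blast
  qed
qed

lemma E_nonempty: "E \<noteq> {}"
proof -
  obtain u where u: "u \<in> V" "u \<noteq> v"
  proof -
    have "card (V - {v}) \<noteq> 0" using two_le_card_V root_in_V finite_V by simp
    then have "V - {v} \<noteq> {}" by (metis card.empty)
    then show ?thesis using that by blast
  qed
  obtain p where p: "is_path E p" "hd p = v" "last p = u" using path_exists[OF root_in_V u(1)] by blast
  then have "2 \<le> length p" using u(2) by (cases p) (auto simp: is_path_iff_walk Suc_le_eq)
  then have "path_edges p \<noteq> []" by (auto simp flip: length_greater_0_conv)
  moreover have "set (path_edges p) \<subseteq> E"
    using p(1) set_path_edges_subset unfolding is_path_iff_walk by blast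
  ultimately show ?thesis using hd_in_set by blast
qed

definition root_path :: "'a set \<Rightarrow> 'a list" where
  "root_path f = (SOME p. is_path E p \<and> hd p = v \<and> 2 \<le> length p \<and> last (path_edges p) = f)"

lemma root_path:
  assumes "f \<in> E"
  shows "is_path E (root_path f)" "hd (root_path f) = v" "2 \<le> length (root_path f)"
    "last (path_edges (root_path f)) = f"
  using someI_ex[OF root_path_to_edge_exists[OF assms]] unfolding root_path_def by blast+

lemma last_root_path_in_edge:
  assumes "f \<in> E"
  shows "last (root_path f) \<in> f"
proof -
  have "f = {root_path f ! (length (root_path f) - 2), last (root_path f)}"
    using root_path[OF assms] last_path_edges by metis
  then show ?thesis by blast
qed

lemma card_E_le: "card E \<le> card V - 1"
proof -
  have "inj_on (\<lambda>f. last (root_path f)) E"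
  proof
    fix f g assume f: "f \<in> E" and g: "g \<in> E"
      and last_eq: "last (root_path f) = last (root_path g)"
    have hd_eq: "hd (root_path f) = hd (root_path g)" using root_path(2)[OF f] root_path(2)[OF g] by simp
    have "root_path f = root_path g"
      by (rule path_unique[OF root_path(1)[OF f] root_path(1)[OF g] hd_eq last_eq])
    then show "f = g" by (metis root_path(4) f g)
  qed
  moreover have "last (root_path f) \<in> V - {v}" if "f \<in> E" for f
  proof -
    have "last (root_path f) \<noteq> hd (root_path f)"
      using root_path(1,3)[OF that] by (cases "root_path f") (auto simp: is_path_iff_walk)
    moreover have "last (root_path f) \<in> V"
      using last_root_path_in_edge[OF that] E_subset_Pow_V that by blast
    ultimately show ?thesis using root_path(2)[OF that] by simp
  qed
  ultimately have "card E \<le> card (V - {v})"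
    using finite_V by (intro card_inj_on_le[where f = "\<lambda>f. last (root_path f)"]) auto
  then show ?thesis using root_in_V finite_V by simp
qed

lemma dist_from_path_nth:
  assumes "is_path E p" "hd p = v" "i < length p"
  shows "dist_from E v (p ! i) = i"
  unfolding dist_from_def
proof (rule Least_equality)
  let ?q = "take (Suc i) p"
  have "p \<noteq> []" using assms(3) by auto
  have q: "is_path E ?q" "?q ! 0 = v" "last ?q = p ! i" "length ?q = Suc i"
    using assms is_path_take[OF assms(1), of "Suc i"] \<open>p \<noteq> []\<close>
    by (simp_all add: hd_conv_nth last_conv_nth)
  then show "\<exists>q. is_path E q \<and> q ! 0 = v \<and> last q = p ! i \<and> length q = Suc i" by blast
  fix n assume "\<exists>q. is_path E q \<and> q ! 0 = v \<and> last q = p ! i \<and> length q = Suc n"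
  then obtain q' where q': "is_path E q'" "q' ! 0 = v" "last q' = p ! i" "length q' = Suc n" by blast
  have "q' = ?q"
    using q q' by (intro path_unique) (auto simp: hd_conv_nth is_path_iff_walk)
  then show "i \<le> n" using q(4) q'(4) by simp
qed

lemma length_path_from_root_le_longest_desc:
  assumes "is_path E p" "hd p = v"
  shows "length p - 1 \<le> longest_desc E v"
proof -
  let ?lengths = "{length q - 1 | q. is_descending_path E v q}"
  have "is_descending_path E v p"
    unfolding is_descending_path_def using assms dist_from_path_nth by auto
  then have "length p - 1 \<in> ?lengths" by blast
  moreover have "?lengths \<subseteq> {..card V}"
  proof
    fix k assume "k \<in> ?lengths"
    then obtain q where q: "is_path E q" "k = length q - 1" unfolding is_descending_path_def by blast
    have "length q \<le> card V" if "2 \<le> length q"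
    proof -
      have "card (set q) \<le> card V" using path_vertices_in_V[OF q(1) that] finite_V by (rule card_mono[rotated])
      then show ?thesis using q(1) distinct_card by (fastforce simp: is_path_iff_walk)
    qed
    then show "k \<in> {..card V}" using q(2) two_le_card_V by fastforce
  qed
  then have "finite ?lengths" using finite_subset by blast
  ultimately show ?thesis
    unfolding longest_desc_def by (rule Max_ge[rotated])
qed

definition spine :: "'a set list \<Rightarrow> 'a set list" where
  "spine \<sigma> = path_edges (root_path (hd \<sigma>))"

definition rooted_reordering :: "'a set list \<Rightarrow> 'a set list" where
  "rooted_reordering \<sigma> = spine \<sigma> @ filter (\<lambda>e. e \<notin> set (spine \<sigma>)) \<sigma>"

definition spine_positions :: "'a set list \<Rightarrow> nat set" where
  "spine_positions \<sigma> = {j. j < length (tl \<sigma>) \<and> tl \<sigma> ! j \<in> set (spine \<sigma>)}"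

context
  fixes \<sigma> assumes shelling: "is_shelling E \<sigma>"
begin

lemma shelling_facts: "\<sigma> \<noteq> []" "distinct \<sigma>" "set \<sigma> = E" "hd \<sigma> \<in> E" "length \<sigma> = card E"
proof -
  show "distinct \<sigma>" "set \<sigma> = E" using shelling unfolding is_shelling_def by auto
  then show "\<sigma> \<noteq> []" using E_nonempty by auto
  then show "hd \<sigma> \<in> E" using \<open>set \<sigma> = E\<close> by auto
  show "length \<sigma> = card E" using \<open>distinct \<sigma>\<close> \<open>set \<sigma> = E\<close> distinct_card by metis
qed

lemma connected_shelling_prefix:
  "1 \<le> k \<Longrightarrow> k \<le> length \<sigma> \<Longrightarrow> connected_graph (\<Union> (set (take k \<sigma>))) (set (take k \<sigma>))"
  using shelling unfolding is_shelling_def by blast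

abbreviation spine_path :: "'a list" where
  "spine_path \<equiv> root_path (hd \<sigma>)"

lemma spine_path: "is_path E spine_path" "hd spine_path = v" "2 \<le> length spine_path"
  using root_path shelling_facts(4) by blast+

lemma last_spine: "last (spine \<sigma>) = hd \<sigma>"
  unfolding spine_def using root_path(4) shelling_facts(4) .

lemma length_spine: "length (spine \<sigma>) = length spine_path - 1"
  by (simp add: spine_def)

lemma spine_nonempty: "spine \<sigma> \<noteq> []"
  using length_spine spine_path(3) by (auto simp flip: length_greater_0_conv)

lemma hd_in_spine: "hd \<sigma> \<in> set (spine \<sigma>)"
  using last_in_set[OF spine_nonempty] last_spine by simp

lemma set_spine_subset: "set (spine \<sigma>) \<subseteq> E"
  unfolding spine_def using spine_path(1) set_path_edges_subset is_path_iff_walk by blast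

lemma distinct_spine: "distinct (spine \<sigma>)"
  unfolding spine_def using spine_path(1) distinct_path_edges is_path_iff_walk by blast

lemma length_spine_le_longest_desc: "length (spine \<sigma>) \<le> longest_desc E v"
  using length_path_from_root_le_longest_desc[OF spine_path(1,2)] length_spine by simp

lemma spine_reversed_in_shelling:
  assumes i: "Suc i < length (spine \<sigma>)"
  shows "index_of \<sigma> (spine \<sigma> ! Suc i) < index_of \<sigma> (spine \<sigma> ! i)"
proof -
  define k where "k = index_of \<sigma> (spine \<sigma> ! i)"
  have "spine \<sigma> ! i \<in> set (spine \<sigma>)" using i by simp
  then have "spine \<sigma> ! i \<in> set \<sigma>" using set_spine_subset shelling_facts(3) by blast
  from index_of_in_set[OF this] have k: "k < length \<sigma>" "\<sigma> ! k = spine \<sigma> ! i"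
    unfolding k_def by auto
  define Q where "Q = set (take (Suc k) \<sigma>)"
  have Q: "connected_graph (\<Union> Q) Q" "Q \<subseteq> E" "spine \<sigma> ! i \<in> Q" "hd \<sigma> \<in> Q"
    unfolding Q_def using k shelling_facts connected_shelling_prefix[of "Suc k"]
    by (auto simp: in_set_conv_nth hd_conv_nth dest: in_set_takeD)
  let ?p = "drop i spine_path"
  have "i < length spine_path" using i length_spine by simp
  have "hd ?p \<in> spine \<sigma> ! i"
    using i \<open>i < length spine_path\<close> by (simp add: spine_def nth_path_edges hd_drop_conv_nth)
  moreover have "last ?p \<in> hd \<sigma>"
    using \<open>i < length spine_path\<close> last_root_path_in_edge[OF shelling_facts(4)] by simp
  moreover have "is_path E ?p" using spine_path(1) \<open>i < length spine_path\<close> by (rule is_path_drop)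
  ultimately have "set (path_edges ?p) \<subseteq> Q"
    using tree Q path_edges_subset_connected_subgraph unfolding is_tree_def by blast
  moreover have "spine \<sigma> ! Suc i \<in> set (path_edges ?p)"
  proof -
    have "spine \<sigma> ! Suc i = drop i (spine \<sigma>) ! 1" "1 < length (drop i (spine \<sigma>))"
      using i by simp_all
    moreover have "drop i (spine \<sigma>) = path_edges ?p" by (simp add: spine_def drop_path_edges)
    ultimately show ?thesis using nth_mem by metis
  qed
  ultimately have "spine \<sigma> ! Suc i \<in> set (take (Suc k) \<sigma>)" unfolding Q_def by blast
  then obtain j where j: "j < Suc k" "\<sigma> ! j = spine \<sigma> ! Suc i"
    by (auto simp: in_set_conv_nth)
  moreover have "j \<noteq> k"
    using j k distinct_spine i by (auto simp: nth_eq_iff_index_eq)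
  have "j < length \<sigma>" using j(1) k(1) by simp
  then have "index_of \<sigma> (spine \<sigma> ! Suc i) = j" using index_of_nth[OF shelling_facts(2)] j(2) by metis
  then show ?thesis using j(1) \<open>j \<noteq> k\<close> unfolding k_def by simp
qed

lemma filter_spine: "filter (\<lambda>e. e \<in> set (spine \<sigma>)) \<sigma> = rev (spine \<sigma>)"
  using filter_in_set_eq_rev[OF shelling_facts(2) distinct_spine] spine_reversed_in_shelling
    set_spine_subset shelling_facts(3) by simp

lemma filter_spine_tl: "filter (\<lambda>e. e \<in> set (spine \<sigma>)) (tl \<sigma>) = tl (rev (spine \<sigma>))"
  using filter_spine hd_in_spine shelling_facts(1) by (metis filter.simps(2) list.collapse list.sel(3))

lemma filter_not_spine_tl:
  "filter (\<lambda>e. e \<notin> set (spine \<sigma>)) (tl \<sigma>) = filter (\<lambda>e. e \<notin> set (spine \<sigma>)) \<sigma>"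
  using hd_in_spine shelling_facts(1) by (metis filter.simps(2) list.collapse)

lemma spine_positions:
  "spine_positions \<sigma> \<subseteq> {0..<card E - 1}" "card (spine_positions \<sigma>) = length (spine \<sigma>) - 1"
proof -
  show "spine_positions \<sigma> \<subseteq> {0..<card E - 1}"
    unfolding spine_positions_def using shelling_facts(5) by auto
  have "card (spine_positions \<sigma>) = length (filter (\<lambda>e. e \<in> set (spine \<sigma>)) (tl \<sigma>))"
    unfolding spine_positions_def by (simp add: length_filter_conv_card)
  then show "card (spine_positions \<sigma>) = length (spine \<sigma>) - 1"
    using filter_spine_tl by simp
qed

lemma connected_spine: "connected_graph (\<Union> (set (spine \<sigma>))) (set (spine \<sigma>))"
  unfolding spine_def using spine_path(3) by (rule connected_path_edges)

lemma connected_spine_Un_prefix: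
  "connected_graph (\<Union> (set (spine \<sigma>) \<union> set (take j \<sigma>))) (set (spine \<sigma>) \<union> set (take j \<sigma>))"
proof (cases "j = 0")
  case False
  define j' where "j' = min j (length \<sigma>)"
  have "1 \<le> j'" "j' \<le> length \<sigma>" "take j \<sigma> = take j' \<sigma>"
    using False shelling_facts(1) unfolding j'_def by (auto simp: min_def Suc_le_eq)
  moreover have "hd \<sigma> \<in> set (take j' \<sigma>)"
    using \<open>1 \<le> j'\<close> shelling_facts(1) by (cases \<sigma>; cases j') auto
  then have "last spine_path \<in> \<Union> (set (take j' \<sigma>))" "last spine_path \<in> \<Union> (set (spine \<sigma>))"
    using last_root_path_in_edge[OF shelling_facts(4)] hd_in_spine by blast+
  ultimately show ?thesis
    using connected_graph_Un[OF connected_spine connected_shelling_prefix] by simp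
qed (simp add: connected_spine)

lemma rooted_reordering_shelling: "is_shelling E (rooted_reordering \<sigma>)"
  unfolding is_shelling_def
proof (intro conjI allI impI)
  show "distinct (rooted_reordering \<sigma>)" "set (rooted_reordering \<sigma>) = E"
    unfolding rooted_reordering_def using distinct_spine shelling_facts(2,3) set_spine_subset by auto
  fix k assume k: "1 \<le> k \<and> k \<le> length (rooted_reordering \<sigma>)"
  show "connected_graph (\<Union> (set (take k (rooted_reordering \<sigma>)))) (set (take k (rooted_reordering \<sigma>)))"
  proof (cases "k \<le> length (spine \<sigma>)")
    case True
    then have "take k (rooted_reordering \<sigma>) = path_edges (take (Suc k) spine_path)"
      unfolding rooted_reordering_def spine_def by (simp add: take_path_edges)
    moreover have "2 \<le> length (take (Suc k) spine_path)" using True k spine_path(3) length_spine by simp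
    ultimately show ?thesis by (simp add: connected_path_edges)
  next
    case False
    obtain j where j: "take (k - length (spine \<sigma>)) (filter (\<lambda>e. e \<notin> set (spine \<sigma>)) \<sigma>)
        = filter (\<lambda>e. e \<notin> set (spine \<sigma>)) (take j \<sigma>)"
      using take_filter_eq_filter_take by blast
    have "take k (rooted_reordering \<sigma>) = spine \<sigma> @ filter (\<lambda>e. e \<notin> set (spine \<sigma>)) (take j \<sigma>)"
      using False j unfolding rooted_reordering_def by simp
    then have "set (take k (rooted_reordering \<sigma>)) = set (spine \<sigma>) \<union> set (take j \<sigma>)"
      by auto
    then show ?thesis using connected_spine_Un_prefix by simp
  qed
qed

lemma root_in_hd_rooted_reordering: "v \<in> hd (rooted_reordering \<sigma>)"
proof -
  have "hd (rooted_reordering \<sigma>) = spine \<sigma> ! 0"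
    using spine_nonempty by (simp add: rooted_reordering_def hd_conv_nth nth_append)
  also have "\<dots> = {spine_path ! 0, spine_path ! 1}"
    using spine_path(3) by (simp add: spine_def nth_path_edges)
  finally show ?thesis
    using spine_path(2,3) hd_conv_nth[of spine_path] by fastforce
qed

end

lemma shelling_eq_if_same_encoding:
  assumes shellings: "is_shelling E \<sigma>" "is_shelling E \<sigma>'"
    and same_reordering: "rooted_reordering \<sigma> = rooted_reordering \<sigma>'"
    and same_length: "length (spine \<sigma>) = length (spine \<sigma>')"
    and same_positions: "spine_positions \<sigma> = spine_positions \<sigma>'"
  shows "\<sigma> = \<sigma>'"
proof -
  have "spine \<sigma> = spine \<sigma>'"
    and rest: "filter (\<lambda>e. e \<notin> set (spine \<sigma>)) \<sigma> = filter (\<lambda>e. e \<notin> set (spine \<sigma>')) \<sigma>'"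
    using same_reordering same_length append_eq_append_conv unfolding rooted_reordering_def by blast+
  define G where "G = set (spine \<sigma>)"
  have G': "G = set (spine \<sigma>')" unfolding G_def \<open>spine \<sigma> = spine \<sigma>'\<close> ..
  have "hd \<sigma> = hd \<sigma>'" using last_spine shellings \<open>spine \<sigma> = spine \<sigma>'\<close> by metis
  have "length (tl \<sigma>) = length (tl \<sigma>')" using shelling_facts(5) shellings by simp
  moreover have "\<forall>j<length (tl \<sigma>). tl \<sigma> ! j \<in> G \<longleftrightarrow> tl \<sigma>' ! j \<in> G"
    using same_positions calculation unfolding spine_positions_def G_def \<open>spine \<sigma> = spine \<sigma>'\<close>
    by (auto simp: set_eq_iff)
  moreover have "filter (\<lambda>e. e \<in> G) (tl \<sigma>) = filter (\<lambda>e. e \<in> G) (tl \<sigma>')"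
    using filter_spine_tl shellings \<open>spine \<sigma> = spine \<sigma>'\<close> unfolding G_def by metis
  moreover have "filter (\<lambda>e. e \<notin> G) (tl \<sigma>) = filter (\<lambda>e. e \<notin> G) (tl \<sigma>')"
    using filter_not_spine_tl[OF shellings(1)] filter_not_spine_tl[OF shellings(2)] rest
    unfolding G_def \<open>spine \<sigma> = spine \<sigma>'\<close> by simp
  ultimately have "tl \<sigma> = tl \<sigma>'" by (rule list_eq_by_filter_partition)
  then show ?thesis
    using \<open>hd \<sigma> = hd \<sigma>'\<close> shelling_facts(1)[OF shellings(1)] shelling_facts(1)[OF shellings(2)]
    by (metis list.collapse)
qed

lemma finite_shellings: "finite {\<sigma>. is_shelling E \<sigma>}"
  using finite_subset_distinct[OF finite_E] by (rule finite_subset[rotated]) (auto simp: is_shelling_def)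

lemma card_shellings_le:
  "card {\<sigma>. is_shelling E \<sigma>}
     \<le> (\<Sum>k<longest_desc E v. (card E - 1) choose k) * card {\<tau>. is_shelling E \<tau> \<and> v \<in> hd \<tau>}"
proof -
  define S where "S = {\<sigma>. is_shelling E \<sigma>}"
  define R where "R = {\<tau>. is_shelling E \<tau> \<and> v \<in> hd \<tau>}"
  define B where "B k = {A. A \<subseteq> {0..<card E - 1} \<and> card A = k}" for k
  define encode where
    "encode \<sigma> = (rooted_reordering \<sigma>, length (spine \<sigma>) - 1, spine_positions \<sigma>)" for \<sigma>
  have inj: "inj_on encode S"
  proof (rule inj_onI)
    fix \<sigma> \<sigma>' assume "\<sigma> \<in> S" "\<sigma>' \<in> S" "encode \<sigma> = encode \<sigma>'"
    moreover have "1 \<le> length (spine \<sigma>)" "1 \<le> length (spine \<sigma>')"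
      using spine_nonempty \<open>\<sigma> \<in> S\<close> \<open>\<sigma>' \<in> S\<close> unfolding S_def by (auto simp: Suc_le_eq)
    ultimately show "\<sigma> = \<sigma>'"
      unfolding S_def encode_def by (auto intro: shelling_eq_if_same_encoding)
  qed
  have encode_into: "encode ` S \<subseteq> (\<Union>k<longest_desc E v. R \<times> {k} \<times> B k)"
  proof
    fix x assume "x \<in> encode ` S"
    then obtain \<sigma> where \<sigma>: "is_shelling E \<sigma>" "x = encode \<sigma>" unfolding S_def by blast
    have "length (spine \<sigma>) - 1 < longest_desc E v"
      using length_spine_le_longest_desc[OF \<sigma>(1)] spine_nonempty[OF \<sigma>(1)] by (cases "spine \<sigma>") auto
    moreover have "rooted_reordering \<sigma> \<in> R"
      unfolding R_def using rooted_reordering_shelling[OF \<sigma>(1)] root_in_hd_rooted_reordering[OF \<sigma>(1)]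
      by simp
    moreover have "spine_positions \<sigma> \<in> B (length (spine \<sigma>) - 1)"
      unfolding B_def using spine_positions[OF \<sigma>(1)] by simp
    ultimately show "x \<in> (\<Union>k<longest_desc E v. R \<times> {k} \<times> B k)" unfolding \<sigma>(2) encode_def by blast
  qed
  have "finite R" unfolding R_def using finite_shellings by (rule finite_subset[rotated]) auto
  have B: "finite (B k)" "card (B k) = (card E - 1) choose k" for k
    unfolding B_def using n_subsets[of "{0..<card E - 1}" k] by (auto simp: Collect_conj_eq)
  have "card S = card (encode ` S)" using inj by (rule card_image[symmetric])
  also have "\<dots> \<le> card (\<Union>k<longest_desc E v. R \<times> {k} \<times> B k)"
    using encode_into \<open>finite R\<close> B(1) by (intro card_mono) auto
  also have "\<dots> \<le> (\<Sum>k<longest_desc E v. card (R \<times> {k} \<times> B k))"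
    by (rule card_UN_le) simp
  also have "\<dots> = card R * (\<Sum>k<longest_desc E v. (card E - 1) choose k)"
    by (simp add: B(2) card_cartesian_product sum_distrib_left)
  finally show ?thesis unfolding S_def R_def by (simp add: mult.commute)
qed

end

lemma sum_choose_lessThan_le_power: "(\<Sum>k<L. n choose k) \<le> (2::nat) ^ n"
proof -
  have "(\<Sum>k<L. n choose k) \<le> (\<Sum>k\<le>max n L. n choose k)"
    by (rule sum_mono2) auto
  also have "\<dots> = (\<Sum>k\<le>n. n choose k)"
    by (rule sum.mono_neutral_left[symmetric]) auto
  also have "\<dots> = 2 ^ n" by (rule choose_row_sum)
  finally show ?thesis .
qed

theorem lemma3p11:
  fixes V :: "'a set" and E :: "'a set set" and v :: 'a
  assumes "is_tree V E" and "card V \<ge> 2" and "v \<in> V"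
  shows "num_shellings E \<le>
           (\<Sum>k<longest_desc E v. (card V - 2) choose k) * num_rooted_shellings E v
         \<and> num_shellings E \<le> 2 ^ (card V - 2) * num_rooted_shellings E v"
proof -
  interpret rooted_tree V E v using assms by unfold_locales
  have "num_shellings E \<le> (\<Sum>k<longest_desc E v. (card E - 1) choose k) * num_rooted_shellings E v"
    unfolding num_shellings_def num_rooted_shellings_def by (rule card_shellings_le)
  also have "\<dots> \<le> (\<Sum>k<longest_desc E v. (card V - 2) choose k) * num_rooted_shellings E v"
    using card_E_le by (intro mult_right_mono sum_mono binomial_right_mono) auto
  finally have bound: "num_shellings E
      \<le> (\<Sum>k<longest_desc E v. (card V - 2) choose k) * num_rooted_shellings E v" .
  also have "\<dots> \<le> 2 ^ (card V - 2) * num_rooted_shellings E v"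
    by (intro mult_right_mono sum_choose_lessThan_le_power) simp
  finally show ?thesis using bound by simp
qed

end
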